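(* Let $v=(x,y,z)^T\in\mathbb{O}^3$ with associator $[v]:=[x,y,z]\neq 0$. If there exists a $3\times3$ Hermitian octonionic matrix $A$ with $Av=v[v]$, then $\operatorname{Re}(x)=\operatorname{Re}(y)=\operatorname{Re}(z)=0$, i.e. $\operatorname{Re}(v)=0$.
   Context: $\mathbb{O}$ denotes the real octonions (8-dimensional normed division algebra, nonassociative). For $w\in\mathbb{O}$, $\operatorname{Re}(w)$ is its real part. The associator is $[x,y,z]=(xy)z-x(yz)$. A $3\times3$ Hermitian octonionic matrix has the form $A=\begin{pmatrix} p & a & \bar c\\ \bar a & m & b\\ c & \bar b & n\end{pmatrix}$ with $p,m,n\in\mathbb{R}$, $a,b,c\in\mathbb{O}$. $Av$ has components $\sum_j A_{ij}v_j$ (octonionic products) and $v[v]=(x[v],y[v],z[v])^T$; thus $Av=v[v]$ means $px+ay+\bar c z = x[v]$, $\bar a x+my+bz=y[v]$, $cx+\bar b y+nz=z[v]$. *)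

theory Defs
  imports Main "HOL.Real"
begin

datatype quat = Quat (q0: real) (q1: real) (q2: real) (q3: real)

instantiation quat :: "{zero, plus, minus, uminus, times}"
begin
definition "0 = Quat 0 0 0 0"
definition "p + q = Quat (q0 p + q0 q) (q1 p + q1 q) (q2 p + q2 q) (q3 p + q3 q)"
definition "p - q = Quat (q0 p - q0 q) (q1 p - q1 q) (q2 p - q2 q) (q3 p - q3 q)"
definition "- p = Quat (- q0 p) (- q1 p) (- q2 p) (- q3 p)"
definition "p * q = Quat
   (q0 p * q0 q - q1 p * q1 q - q2 p * q2 q - q3 p * q3 q)
   (q0 p * q1 q + q1 p * q0 q + q2 p * q3 q - q3 p * q2 q)
   (q0 p * q2 q - q1 p * q3 q + q2 p * q0 q + q3 p * q1 q)
   (q0 p * q3 q + q1 p * q2 q - q2 p * q1 q + q3 p * q0 q)"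
instance ..
end

definition qcnj :: "quat \<Rightarrow> quat" where
  "qcnj p = Quat (q0 p) (- q1 p) (- q2 p) (- q3 p)"

section \<open>Octonions via the Cayley--Dickson construction\<close>

datatype oct = Oct (ofst: quat) (osnd: quat)

instantiation oct :: "{zero, plus, minus, uminus, times}"
begin
definition "0 = Oct 0 0"
definition "x + y = Oct (ofst x + ofst y) (osnd x + osnd y)"
definition "x - y = Oct (ofst x - ofst y) (osnd x - osnd y)"
definition "- x = Oct (- ofst x) (- osnd x)"
definition "x * y = Oct (ofst x * ofst y - qcnj (osnd y) * osnd x)
                        (osnd y * ofst x + osnd x * qcnj (ofst y))"
instance ..
end

definition ocnj :: "oct \<Rightarrow> oct" where
  "ocnj x = Oct (qcnj (ofst x)) (- osnd x)"

definition oRe :: "oct \<Rightarrow> real" where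
  "oRe x = q0 (ofst x)"

definition oreal :: "real \<Rightarrow> oct" where
  "oreal r = Oct (Quat r 0 0 0) 0"

definition associator :: "oct \<Rightarrow> oct \<Rightarrow> oct \<Rightarrow> oct" where
  "associator x y z = (x * y) * z - x * (y * z)"

end

theory Submission
  imports Defs
begin

text \<open>
  Write \<open>w = [x,y,z]\<close> and \<open>\<langle>u,v\<rangle> = Re(u\<^sup>* v)\<close> for the Euclidean inner
  product on the octonions, extended coordinatewise to triples.  For a Hermitian
  matrix \<open>A\<close> (diagonal p, m, n and off-diagonal a, b, c) the pairing
  \<open>\<langle>u, A v\<rangle>\<close> is real-linear in the entries of \<open>A\<close>, with one coefficient per
  entry.  With \<open>q = Im(y\<^sup>* x)\<close> the test vector \<open>u = (x q, y q, z q + w)\<close> makes every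
  one of these coefficients vanish, so \<open>\<langle>u, A v\<rangle> = 0\<close>.  On the other hand, if
  \<open>A v = v w\<close> then \<open>\<langle>u, v w\<rangle> = (|x|\<^sup>2 + |y|\<^sup>2 + |z|\<^sup>2) \<langle>q, w\<rangle> + \<langle>w, z w\<rangle>
  = Re(z) |w|\<^sup>2\<close>, using \<open>\<langle>q, w\<rangle> = 0\<close>.  Since \<open>w \<noteq> 0\<close>, \<open>Re z = 0\<close>.  The
  associator is invariant under cyclic permutation of its arguments, and so is
  the eigen-equation, which gives \<open>Re x = Re y = 0\<close> as well.
\<close>

text \<open>Two octonions are equal if their eight real coordinates agree; together
  with the unfolded operations this reduces identities to polynomial algebra.\<close>
lemma oct_eqI:
  assumes "q0 (ofst x) = q0 (ofst y)" "q1 (ofst x) = q1 (ofst y)"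
    "q2 (ofst x) = q2 (ofst y)" "q3 (ofst x) = q3 (ofst y)"
    "q0 (osnd x) = q0 (osnd y)" "q1 (osnd x) = q1 (osnd y)"
    "q2 (osnd x) = q2 (osnd y)" "q3 (osnd x) = q3 (osnd y)"
  shows "x = y"
  using assms by (cases x; cases y; rename_tac a b c d; case_tac a; case_tac b;
      case_tac c; case_tac d; simp)

lemmas oct_coords = times_oct_def plus_oct_def minus_oct_def uminus_oct_def zero_oct_def
  times_quat_def plus_quat_def minus_quat_def uminus_quat_def zero_quat_def
  qcnj_def ocnj_def oRe_def oreal_def associator_def

definition oinner :: "oct \<Rightarrow> oct \<Rightarrow> real" where
  "oinner u v = oRe (ocnj u * v)"

definition onorm2 :: "oct \<Rightarrow> real" where
  "onorm2 u = oinner u u"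

definition oim :: "oct \<Rightarrow> oct" where
  "oim u = u - oreal (oRe u)"

text \<open>The squared norm is the sum of squares of the coordinates, hence positive
  off zero; this is where \<open>[v] \<noteq> 0\<close> enters.\<close>
lemma onorm2_pos:
  assumes "u \<noteq> 0"
  shows "onorm2 u > 0"
proof -
  have sum_sq: "onorm2 u = (q0 (ofst u))\<^sup>2 + (q1 (ofst u))\<^sup>2 + (q2 (ofst u))\<^sup>2 + (q3 (ofst u))\<^sup>2
     + (q0 (osnd u))\<^sup>2 + (q1 (osnd u))\<^sup>2 + (q2 (osnd u))\<^sup>2 + (q3 (osnd u))\<^sup>2"
    by (simp add: onorm2_def oinner_def oct_coords power2_eq_square)
  have "\<not> (q0 (ofst u) = 0 \<and> q1 (ofst u) = 0 \<and> q2 (ofst u) = 0 \<and> q3 (ofst u) = 0 \<and>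
     q0 (osnd u) = 0 \<and> q1 (osnd u) = 0 \<and> q2 (osnd u) = 0 \<and> q3 (osnd u) = 0)"
    using assms by (auto intro!: oct_eqI simp: zero_oct_def zero_quat_def)
  then show ?thesis unfolding sum_sq
    by (smt (verit) not_sum_power2_lt_zero sum_power2_eq_zero_iff zero_le_power2)
qed

lemma oinner_add_left: "oinner (s + t) v = oinner s v + oinner t v"
  by (simp add: oinner_def oct_coords; algebra)

text \<open>Left multiplication by \<open>x\<close> scales the inner product by \<open>|x|\<^sup>2\<close>
  (a consequence of the composition law \<open>|x a| = |x| |a|\<close>).\<close>
lemma oinner_mult_left: "oinner (x * a) (x * b) = onorm2 x * oinner a b"
  by (simp add: onorm2_def oinner_def oct_coords; algebra)

lemma oinner_right_mult: "oinner w (z * w) = oRe z * onorm2 w"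
  by (simp add: onorm2_def oinner_def oct_coords; algebra)

text \<open>Right multiplication by \<open>q\<close> moves \<open>x\<close> by an angle governed by \<open>Re q\<close>;
  in particular \<open>x q \<perp> x\<close> for imaginary \<open>q\<close>.\<close>
lemma oinner_mult_right_self: "oinner (x * q) x = onorm2 x * oRe q"
  by (simp add: onorm2_def oinner_def oct_coords; algebra)

lemma oRe_oim: "oRe (oim u) = 0"
  by (simp add: oim_def oct_coords)

lemma associator_cyclic: "associator y z x = associator x y z"
  by (rule oct_eqI; simp add: oct_coords; algebra)

lemma oinner_associator: "oinner (associator x y z) z = 0"
  by (simp add: oinner_def oct_coords; algebra)

lemma oinner_oim_associator: "oinner (oim (ocnj y * x)) (associator x y z) = 0"
  by (simp add: oim_def oinner_def oct_coords; algebra)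

definition hermitian_eigen :: "oct \<Rightarrow> oct \<Rightarrow> oct \<Rightarrow> oct \<Rightarrow> bool" where
  "hermitian_eigen x y z e \<longleftrightarrow> (\<exists>(p::real) (m::real) (n::real) a b c.
      oreal p * x + a * y + ocnj c * z = x * e \<and>
      ocnj a * x + oreal m * y + b * z = y * e \<and>
      c * x + ocnj b * y + oreal n * z = z * e)"

lemma oct_add_rotate: "A + B + C = B + C + (A::oct)"
  by (rule oct_eqI; simp add: oct_coords)

text \<open>Cyclically permuting the vector keeps the eigen-equation: the permuted
  matrix is again Hermitian, with diagonal (m, n, p) and entries (b, c, a).\<close>
lemma hermitian_eigen_rotate:
  assumes "hermitian_eigen x y z e"
  shows "hermitian_eigen y z x e"
proof -
  obtain p m n a b c where
    "oreal p * x + a * y + ocnj c * z = x * e"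
    "ocnj a * x + oreal m * y + b * z = y * e"
    "c * x + ocnj b * y + oreal n * z = z * e"
    using assms unfolding hermitian_eigen_def by blast
  then have "oreal m * y + b * z + ocnj a * x = y * e"
    "ocnj b * y + oreal n * z + c * x = z * e"
    "a * y + ocnj c * z + oreal p * x = x * e"
    by (simp_all only: oct_add_rotate)
  then show ?thesis unfolding hermitian_eigen_def by blast
qed

text \<open>The pairing \<open>\<langle>u, A v\<rangle>\<close> expanded in the entries of the Hermitian matrix:
  each off-diagonal entry appears once, through the adjoint relation
  \<open>\<langle>u\<^sub>i, a v\<^sub>j\<rangle> + \<langle>u\<^sub>j, a\<^sup>* v\<^sub>i\<rangle> = Re(a (v\<^sub>j u\<^sub>i\<^sup>* + u\<^sub>j v\<^sub>i\<^sup>*))\<close>.\<close>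
lemma hermitian_pairing:
  "oinner u1 (oreal p * x + a * y + ocnj c * z) + oinner u2 (ocnj a * x + oreal m * y + b * z)
      + oinner u3 (c * x + ocnj b * y + oreal n * z)
   = p * oinner u1 x + m * oinner u2 y + n * oinner u3 z
     + oRe (a * (y * ocnj u1 + u2 * ocnj x)) + oRe (b * (z * ocnj u2 + u3 * ocnj y))
     + oRe (c * (x * ocnj u3 + u1 * ocnj z))"
  by (simp add: oinner_def oct_coords; algebra)

lemma test_vector_off_diagonal:
  assumes "q = oim (ocnj y * x)" and "w = associator x y z"
  shows "y * ocnj (x * q) + (y * q) * ocnj x = 0"
    and "z * ocnj (y * q) + (z * q + w) * ocnj y = 0"
    and "x * ocnj (z * q + w) + (x * q) * ocnj z = 0"
  unfolding assms
  by (rule oct_eqI; simp add: oim_def oct_coords; algebra)+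

lemma test_vector_orthogonal:
  assumes q: "q = oim (ocnj y * x)" and w: "w = associator x y z"
  shows "oinner (x * q) (oreal p * x + a * y + ocnj c * z)
       + oinner (y * q) (ocnj a * x + oreal m * y + b * z)
       + oinner (z * q + w) (c * x + ocnj b * y + oreal n * z) = 0"
proof -
  have diag: "oinner (x * q) x = 0" "oinner (y * q) y = 0" "oinner (z * q + w) z = 0"
    by (simp_all add: oinner_mult_right_self oinner_add_left oRe_oim q w
        oinner_associator)
  have "oRe (a * 0) = 0" for a :: oct
    by (simp add: oct_coords)
  then show ?thesis
    unfolding hermitian_pairing diag test_vector_off_diagonal[OF q w]
    by simp
qed

lemma eigen_associator_oRe_last:
  assumes eig: "hermitian_eigen x y z (associator x y z)"
    and nz: "associator x y z \<noteq> 0"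
  shows "oRe z = 0"
proof -
  define q where "q = oim (ocnj y * x)"
  define w where "w = associator x y z"
  obtain p m n a b c where
    row1: "oreal p * x + a * y + ocnj c * z = x * w" and
    row2: "ocnj a * x + oreal m * y + b * z = y * w" and
    row3: "c * x + ocnj b * y + oreal n * z = z * w"
    using eig unfolding hermitian_eigen_def w_def by blast
  have "0 = oinner (x * q) (x * w) + oinner (y * q) (y * w) + oinner (z * q + w) (z * w)"
    using test_vector_orthogonal[OF q_def w_def, of p a c m b n]
    unfolding row1 row2 row3 by simp
  also have "\<dots> = (onorm2 x + onorm2 y + onorm2 z) * oinner q w + oRe z * onorm2 w"
    by (simp add: oinner_mult_left oinner_add_left oinner_right_mult algebra_simps)
  also have "oinner q w = 0"
    unfolding q_def w_def by (rule oinner_oim_associator)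
  finally have "oRe z * onorm2 w = 0"
    by simp
  moreover have "onorm2 w > 0"
    using nz onorm2_pos w_def by simp
  ultimately show ?thesis
    by simp
qed

theorem theorem1:
  fixes x y z :: oct
  assumes "associator x y z \<noteq> 0"
    and "\<exists>(p::real) (m::real) (n::real) (a::oct) (b::oct) (c::oct).
           oreal p * x + a * y + ocnj c * z = x * associator x y z \<and>
           ocnj a * x + oreal m * y + b * z = y * associator x y z \<and>
           c * x + ocnj b * y + oreal n * z = z * associator x y z"
  shows "oRe x = 0 \<and> oRe y = 0 \<and> oRe z = 0"
proof -
  have eig_xyz: "hermitian_eigen x y z (associator x y z)"
    using assms(2) unfolding hermitian_eigen_def .
  have cyc: "associator y z x = associator x y z" "associator z x y = associator x y z"
    using associator_cyclic by metis+
  have eig_yzx: "hermitian_eigen y z x (associator y z x)"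
    using hermitian_eigen_rotate[OF eig_xyz] unfolding cyc .
  have eig_zxy: "hermitian_eigen z x y (associator z x y)"
    using hermitian_eigen_rotate[OF eig_yzx] unfolding cyc .
  have nz: "associator y z x \<noteq> 0" "associator z x y \<noteq> 0"
    using assms(1) by (simp_all add: cyc)
  show ?thesis
    using eigen_associator_oRe_last[OF eig_xyz assms(1)]
      eigen_associator_oRe_last[OF eig_yzx nz(1)]
      eigen_associator_oRe_last[OF eig_zxy nz(2)]
    by simp
qed

end
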